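(* Let $r\in\{2,3\}$, let $(\mathbf{a}_1,\mathbf{a}_2,\mathbf{a}_3)$ be $f$-tuples with entries in $\{0,\dots,p-1\}$ which are weakly generic, let $\tau$ be the corresponding non-principal-series tame type for $I_K$ and $(s_j)_{j=0}^{f-1}\in S_3^f$ an orientation of $(\mathbf{a}_1,\mathbf{a}_2,\mathbf{a}_3)$. For $0\le j\le f-1$ and $0\le i\le r-1$ define $s'_{j+if}=s_\tau^{\,i+1}\circ s_j\in S_3$, where $s_\tau=(23)$ if $r=2$ and $s_\tau=(123)$ if $r=3$. Then $(s'_{j'})_{j'=0}^{f'-1}\in S_3^{f'}$ is an orientation of $\tau'$.
   Context: $p>3$; $K=\mathbb{Q}_{p^f}$, $f'=fr$, $K'=\mathbb{Q}_{p^{f'}}$. $\omega_{f'}$ is a fundamental character of niveau $f'$ of $I_{K'}$ (viewed in $\mathcal{O}^\times$). For an $m$-tuple $\mathbf{b}=(b_i)_{i\in\mathbb{Z}/m}$ put $\mathbf{b}^{(j)}=\sum_{i=0}^{m-1}b_{-j+i}p^i$. The triple $(\mathbf{a}_1,\mathbf{a}_2,\mathbf{a}_3)$ is weakly generic if $3\le|a_{k,j}-a_{l,j}|\le p-4$ for all $k\ne l$, all $j$. The type $\tau$ is $\omega_{f'}^{-\mathbf{a}_1^{(0)}-p^f\mathbf{a}_1^{(0)}}\oplus\omega_{f'}^{-\mathbf{a}_2^{(0)}-p^f\mathbf{a}_3^{(0)}}\oplus\omega_{f'}^{-\mathbf{a}_3^{(0)}-p^f\mathbf{a}_2^{(0)}}$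 if $r=2$, and $\omega_{f'}^{-\mathbf{a}_1^{(0)}-p^f\mathbf{a}_2^{(0)}-p^{2f}\mathbf{a}_3^{(0)}}\oplus\omega_{f'}^{-\mathbf{a}_2^{(0)}-p^f\mathbf{a}_3^{(0)}-p^{2f}\mathbf{a}_1^{(0)}}\oplus\omega_{f'}^{-\mathbf{a}_3^{(0)}-p^f\mathbf{a}_1^{(0)}-p^{2f}\mathbf{a}_2^{(0)}}$ if $r=3$. Its restriction $\tau'$ to $I_{K'}$ is written uniquely as $\eta_1\oplus\eta_2\oplus\eta_3$ (in this order) with $\eta_k=\omega_{f'}^{-\mathbf{a}'^{(0)}_k}$ for $f'$-tuples $\mathbf{a}'_k$ with entries in $[0,p-1]$; an orientation of $\tau'$ means an orientation of $(\mathbf{a}'_1,\mathbf{a}'_2,\mathbf{a}'_3)$. An orientation of a triple of $m$-tuples $(\mathbf{b}_1,\mathbf{b}_2,\mathbf{b}_3)$ is $(t_j)\in S_3^m$ with $\mathbf{b}^{(j)}_{t_j(1)}\ge\mathbf{b}^{(j)}_{t_j(2)}\ge\mathbf{b}^{(j)}_{t_j(3)}$ for all $j$. Permutations compose right to left and $(123)$ is $1\mapsto2\mapsto3\mapsto1$. *)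

theory Defs
  imports Main "HOL-Combinatorics.Permutations" "HOL-Computational_Algebra.Primes"
begin

text \<open>An m-tuple indexed by Z/m is a function b :: nat => nat, only the values at
  0..m-1 matter; indices are read modulo m.
  tup_shift p m b j = b^(j) = sum_{i=0}^{m-1} b_{-j+i} p^i.\<close>
definition tup_shift :: "nat \<Rightarrow> nat \<Rightarrow> (nat \<Rightarrow> nat) \<Rightarrow> nat \<Rightarrow> nat" where
  "tup_shift p m b j = (\<Sum>i<m. b (nat ((int i - int j) mod int m)) * p ^ i)"

definition is_orientation ::
  "nat \<Rightarrow> nat \<Rightarrow> (nat \<Rightarrow> nat \<Rightarrow> nat) \<Rightarrow> (nat \<Rightarrow> nat \<Rightarrow> nat) \<Rightarrow> bool" where
  "is_orientation p m B t \<longleftrightarrow>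
     (\<forall>j<m. t j permutes {1,2,3} \<and>
        tup_shift p m (B (t j 1)) j \<ge> tup_shift p m (B (t j 2)) j \<and>
        tup_shift p m (B (t j 2)) j \<ge> tup_shift p m (B (t j 3)) j)"

definition weakly_generic :: "nat \<Rightarrow> nat \<Rightarrow> (nat \<Rightarrow> nat \<Rightarrow> nat) \<Rightarrow> bool" where
  "weakly_generic p f A \<longleftrightarrow>
     (\<forall>j<f. \<forall>k\<in>{1,2,3}. \<forall>l\<in>{1,2,3}. k \<noteq> l \<longrightarrow>
        3 \<le> \<bar>int (A k j) - int (A l j)\<bar> \<and> \<bar>int (A k j) - int (A l j)\<bar> \<le> int p - 4)"

definition perm23 :: "nat \<Rightarrow> nat" where
  "perm23 x = (if x = 2 then 3 else if x = 3 then 2 else x)"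

definition perm123 :: "nat \<Rightarrow> nat" where
  "perm123 x = (if x = 1 then 2 else if x = 2 then 3 else if x = 3 then 1 else x)"

definition s_tau :: "nat \<Rightarrow> nat \<Rightarrow> nat" where
  "s_tau r = (if r = 2 then perm23 else perm123)"

text \<open>Exponent E_k (so that the k-th summand of tau is omega_{f'}^{-E_k}).\<close>
definition tau_exp :: "nat \<Rightarrow> nat \<Rightarrow> nat \<Rightarrow> (nat \<Rightarrow> nat \<Rightarrow> nat) \<Rightarrow> nat \<Rightarrow> nat" where
  "tau_exp p f r A k =
    (let v = (\<lambda>k. tup_shift p f (A k) 0) in
     if r = 2 then
       (if k = 1 then v 1 + p ^ f * v 1
        else if k = 2 then v 2 + p ^ f * v 3
        else v 3 + p ^ f * v 2)
     else
       (if k = 1 then v 1 + p ^ f * v 2 + p ^ (2 * f) * v 3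
        else if k = 2 then v 2 + p ^ f * v 3 + p ^ (2 * f) * v 1
        else v 3 + p ^ f * v 1 + p ^ (2 * f) * v 2))"

text \<open>The f'-tuple a'_k with entries in [0,p-1] such that a'_k^(0) = E_k, i.e. eta_k =
  omega_{f'}^{-a'_k^(0)}: the base-p digits of E_k.\<close>
definition tau'_tuple :: "nat \<Rightarrow> nat \<Rightarrow> nat \<Rightarrow> (nat \<Rightarrow> nat \<Rightarrow> nat) \<Rightarrow> nat \<Rightarrow> nat \<Rightarrow> nat" where
  "tau'_tuple p f r A k i = (tau_exp p f r A k div p ^ i) mod p"

end

theory Submission
  imports Defs "HOL-Combinatorics.Cycles"
begin

text \<open>The base-\<open>p\<close> digits of \<open>a'_k\<close> are those of \<open>a_k, a_{s_\<tau>(k)}, ..., a_{s_\<tau>^(r-1)(k)}\<close>,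
  concatenated in blocks of length \<open>f\<close>. Hence the leading digit of \<open>a'_{s_\<tau>^(i+1)(k)}^(j+if)\<close> is the
  leading digit \<open>a_{k,f-1-j}\<close> of \<open>a_k^(j)\<close>. Weak genericity enters only through the fact that these
  leading digits are pairwise distinct for \<open>k = 1, 2, 3\<close>, so they alone decide the order of the
  \<open>a_k^(j)\<close> as well as that of the \<open>a'_{s_\<tau>^(i+1)(k)}^(j+if)\<close>.\<close>

lemma sum_digits_less_power:
  fixes d :: "nat \<Rightarrow> nat"
  assumes "\<And>i. i < n \<Longrightarrow> d i < p"
  shows "(\<Sum>i<n. d i * p ^ i) < p ^ n"
  using assms
proof (induction n)
  case 0
  then show ?case by simp
next
  case (Suc n)
  have "(\<Sum>i<n. d i * p ^ i) < p ^ n"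
    using Suc by auto
  moreover have "d n * p ^ n + p ^ n \<le> p * p ^ n"
    using Suc.prems[of n] by (metis Suc_leI add.commute lessI mult_Suc mult_le_mono1)
  ultimately show ?case by simp
qed

lemma sum_digits_less_of_top_digit_less:
  fixes b c :: "nat \<Rightarrow> nat"
  assumes "\<And>i. i < m \<Longrightarrow> c i < p" and "c m < b m"
  shows "(\<Sum>i<Suc m. c i * p ^ i) < (\<Sum>i<Suc m. b i * p ^ i)"
proof -
  have "(\<Sum>i<m. c i * p ^ i) < p ^ m"
    using assms(1) by (rule sum_digits_less_power)
  moreover have "c m * p ^ m + p ^ m \<le> b m * p ^ m"
    using assms(2) by (metis Suc_leI add.commute mult_Suc mult_le_mono1)
  ultimately show ?thesis by simp
qed

lemma digit_of_sum_digits: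
  fixes d :: "nat \<Rightarrow> nat"
  assumes "\<And>i. i < n \<Longrightarrow> d i < p" and "i < n"
  shows "((\<Sum>m<n. d m * p ^ m) div p ^ i) mod p = d i"
  using assms
proof (induction n)
  case 0
  then show ?case by simp
next
  case (Suc n)
  have p_pos: "p > 0"
    using Suc.prems by fastforce
  have div_split: "(\<Sum>m<Suc n. d m * p ^ m) div p ^ i = (\<Sum>m<n. d m * p ^ m) div p ^ i + d n * p ^ (n - i)"
    if "i \<le> n"
  proof -
    have "p ^ n = p ^ (n - i) * p ^ i"
      using that by (simp flip: power_add)
    then have sum_eq: "(\<Sum>m<Suc n. d m * p ^ m) = (\<Sum>m<n. d m * p ^ m) + d n * p ^ (n - i) * p ^ i"
      by simp
    show ?thesis
      unfolding sum_eq using p_pos by simp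
  qed
  show ?case
  proof (cases "i < n")
    case True
    have "p ^ (n - i) = p * p ^ (n - i - 1)"
      using True by (metis Suc_diff_Suc diff_Suc_1 power_Suc)
    then show ?thesis
      using Suc True div_split by (simp add: mult.left_commute)
  next
    case False
    then have "i = n"
      using Suc by auto
    moreover have "(\<Sum>m<n. d m * p ^ m) < p ^ n"
      using Suc.prems by (intro sum_digits_less_power) auto
    ultimately show ?thesis
      using Suc.prems div_split by simp
  qed
qed

lemma sum_digits_blocks:
  fixes h :: "nat \<Rightarrow> nat \<Rightarrow> nat"
  shows "(\<Sum>m<q * f. h (m div f) (m mod f) * p ^ m) = (\<Sum>b<q. p ^ (b * f) * (\<Sum>i<f. h b i * p ^ i))"
proof -
  have "(\<Sum>m\<in>{b * f..<b * f + f}. h (m div f) (m mod f) * p ^ m) = p ^ (b * f) * (\<Sum>i<f. h b i * p ^ i)"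
    for b
    using sum.shift_bounds_nat_ivl[of "\<lambda>m. h (m div f) (m mod f) * p ^ m" 0 "b * f" f]
    by (auto simp: sum_distrib_left power_add atLeast0LessThan add.commute mult.left_commute
        intro!: sum.cong)
  then show ?thesis
    by (simp flip: sum.nat_group)
qed

text \<open>Digit \<open>i\<close> of \<open>b^(j)\<close> is \<open>b_{(i-j) mod m}\<close>, so its leading digit is \<open>b_{m-1-j}\<close>.\<close>

lemma tup_shift_less_of_top_digit_less:
  assumes "j < m" and "\<And>i. i < m \<Longrightarrow> c i < p" and "c (m - 1 - j) < b (m - 1 - j)"
  shows "tup_shift p m c j < tup_shift p m b j"
proof -
  obtain n where m: "m = Suc n"
    using assms(1) by (cases m) auto
  have top_index: "nat ((int n - int j) mod int m) = n - j"
    using assms(1) m by (simp flip: of_nat_diff)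
  show ?thesis
    unfolding tup_shift_def m
  proof (rule sum_digits_less_of_top_digit_less)
    show "c (nat ((int i - int j) mod int (Suc n))) < p" if "i < n" for i
      using assms(2) m by (simp add: nat_less_iff)
  qed (use assms(3) top_index m in simp)
qed

lemma tup_shift_le_iff_top_digit_le:
  assumes "j < m" and "\<And>i. i < m \<Longrightarrow> b i < p" and "\<And>i. i < m \<Longrightarrow> c i < p"
    and "b (m - 1 - j) \<noteq> c (m - 1 - j)"
  shows "tup_shift p m c j \<le> tup_shift p m b j \<longleftrightarrow> c (m - 1 - j) \<le> b (m - 1 - j)"
proof
  assume "tup_shift p m c j \<le> tup_shift p m b j"
  then show "c (m - 1 - j) \<le> b (m - 1 - j)"
    using tup_shift_less_of_top_digit_less[OF assms(1,2)] by (meson leD le_less_linear)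
next
  assume "c (m - 1 - j) \<le> b (m - 1 - j)"
  then have "c (m - 1 - j) < b (m - 1 - j)"
    using assms(4) by simp
  then have "tup_shift p m c j < tup_shift p m b j"
    by (intro tup_shift_less_of_top_digit_less assms(1,3))
  then show "tup_shift p m c j \<le> tup_shift p m b j"
    by simp
qed

lemma tup_shift_zero: "tup_shift p m b 0 = (\<Sum>i<m. b i * p ^ i)"
  unfolding tup_shift_def by (rule sum.cong) (auto simp flip: nat_mod_as_int)

lemma s_tau_permutes:
  assumes "r \<in> {2, 3}"
  shows "s_tau r permutes {1, 2, 3}"
proof -
  have perm23_eq: "perm23 = transpose 2 3"
    by (rule ext) (simp add: perm23_def transpose_def)
  have perm123_eq: "perm123 = transpose 1 2 \<circ> transpose 2 3"
    by (rule ext) (simp add: perm123_def transpose_def)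
  show ?thesis
    using assms unfolding s_tau_def perm23_eq perm123_eq
    by (auto intro!: permutes_compose permutes_swap_id)
qed

lemma s_tau_funpow_order:
  assumes "r \<in> {2, 3}"
  shows "s_tau r ^^ r = id"
proof
  fix x :: nat
  have "r = 2 \<or> r = 3"
    using assms by auto
  then show "(s_tau r ^^ r) x = id x"
  proof
    assume "r = 2" then show ?thesis by (simp add: s_tau_def perm23_def numeral_2_eq_2)
  next
    assume "r = 3" then show ?thesis by (simp add: s_tau_def perm123_def numeral_3_eq_3)
  qed
qed

lemma tau_exp_eq_sum_blocks:
  assumes "r \<in> {2, 3}" and "k \<in> {1, 2, 3}"
  shows "tau_exp p f r A k = (\<Sum>b<r. p ^ (b * f) * tup_shift p f (A ((s_tau r ^^ b) k)) 0)"
  using assms unfolding tau_exp_def Let_def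
  by (auto simp: s_tau_def perm23_def perm123_def numeral_eq_Suc mult.commute)

lemma tau'_tuple_eq:
  assumes "r \<in> {2, 3}" and "k \<in> {1, 2, 3}" and "m < f * r"
    and digits: "\<And>k j. k \<in> {1, 2, 3} \<Longrightarrow> j < f \<Longrightarrow> A k j < p"
  shows "tau'_tuple p f r A k m = A ((s_tau r ^^ (m div f)) k) (m mod f)"
proof -
  have exp_eq: "tau_exp p f r A k = (\<Sum>m<r * f. A ((s_tau r ^^ (m div f)) k) (m mod f) * p ^ m)"
    unfolding tau_exp_eq_sum_blocks[OF assms(1,2)] tup_shift_zero
      sum_digits_blocks[where h = "\<lambda>b. A ((s_tau r ^^ b) k)"] ..
  show ?thesis
    unfolding tau'_tuple_def exp_eq
  proof (rule digit_of_sum_digits)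
    fix i
    assume "i < r * f"
    show "A ((s_tau r ^^ (i div f)) k) (i mod f) < p"
    proof (rule digits)
      show "(s_tau r ^^ (i div f)) k \<in> {1, 2, 3}"
        using permutes_in_image[OF permutes_funpow[OF s_tau_permutes[OF assms(1)]]] assms(2) by blast
      show "i mod f < f"
        using \<open>i < r * f\<close> by (cases "f = 0") auto
    qed
  qed (use assms(3) in \<open>simp add: mult.commute\<close>)
qed

lemma block_index_less:
  fixes i j f r :: nat
  assumes "j < f" and "i < r"
  shows "j + i * f < f * r"
proof -
  have "Suc i * f \<le> r * f"
    using assms(2) by (intro mult_le_mono1) simp
  then show ?thesis
    using assms(1) by (simp add: mult.commute)
qed

lemma reversed_block_index:
  fixes i j f r :: nat
  assumes "j < f" and "i < r"
  shows "f * r - 1 - (j + i * f) = (r - 1 - i) * f + (f - 1 - j)"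
proof -
  obtain d where "r = Suc i + d"
    using assms(2) less_iff_Suc_add by auto
  then show ?thesis
    using assms(1) by (simp add: algebra_simps)
qed

lemma tau'_tuple_top_digit:
  assumes "r \<in> {2, 3}" and "y \<in> {1, 2, 3}" and "j < f" and "i < r"
    and "\<And>k j. k \<in> {1, 2, 3} \<Longrightarrow> j < f \<Longrightarrow> A k j < p"
  shows "tau'_tuple p f r A ((s_tau r ^^ (i + 1)) y) (f * r - 1 - (j + i * f)) = A y (f - 1 - j)"
proof -
  let ?m = "f * r - 1 - (j + i * f)"
  have block_div_mod: "(q * f + x) div f = q" "(q * f + x) mod f = x" if "x < f" for q x
    using that by simp_all
  have "f - 1 - j < f"
    using assms(3) by simp
  then have m_div: "?m div f = r - 1 - i" and m_mod: "?m mod f = f - 1 - j"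
    unfolding reversed_block_index[OF assms(3,4)] by (fact block_div_mod)+
  have "r = (r - 1 - i) + (i + 1)"
    using assms(4) by simp
  then have "(s_tau r ^^ (r - 1 - i)) ((s_tau r ^^ (i + 1)) y) = (s_tau r ^^ r) y"
    by (metis funpow_add comp_apply)
  then have rotate_back: "(s_tau r ^^ (r - 1 - i)) ((s_tau r ^^ (i + 1)) y) = y"
    by (simp add: s_tau_funpow_order[OF assms(1)])
  have "(s_tau r ^^ (i + 1)) y \<in> {1, 2, 3}"
    using permutes_in_image[OF permutes_funpow[OF s_tau_permutes[OF assms(1)]]] assms(2) by blast
  moreover have "?m < f * r"
    using block_index_less[OF assms(3,4)] by linarith
  ultimately show ?thesis
    using tau'_tuple_eq[OF assms(1) _ _ assms(5)] m_div m_mod rotate_back by simp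
qed

lemma tau'_tuple_shift_le_iff:
  assumes "r \<in> {2, 3}" and "weakly_generic p f A" and "j < f" and "i < r"
    and "k \<in> {1, 2, 3}" and "l \<in> {1, 2, 3}"
    and digits: "\<And>k j. k \<in> {1, 2, 3} \<Longrightarrow> j < f \<Longrightarrow> A k j < p"
  shows "tup_shift p (f * r) (tau'_tuple p f r A ((s_tau r ^^ (i + 1)) k)) (j + i * f)
           \<le> tup_shift p (f * r) (tau'_tuple p f r A ((s_tau r ^^ (i + 1)) l)) (j + i * f)
         \<longleftrightarrow> tup_shift p f (A k) j \<le> tup_shift p f (A l) j"
proof (cases "k = l")
  case False
  have top: "f - 1 - j < f"
    using assms(3) by simp
  have "3 \<le> \<bar>int (A l (f - 1 - j)) - int (A k (f - 1 - j))\<bar>"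
    using assms(2)[unfolded weakly_generic_def, rule_format, OF top assms(6,5) not_sym[OF False]]
    by (rule conjunct1)
  then have top_digits_ne: "A l (f - 1 - j) \<noteq> A k (f - 1 - j)"
    by auto
  have "p > 0"
    using digits[OF assms(5,3)] by simp
  then have tau'_digits: "tau'_tuple p f r A x n < p" for x n
    unfolding tau'_tuple_def by simp
  let ?c = "tau'_tuple p f r A ((s_tau r ^^ (i + 1)) k)"
    and ?b = "tau'_tuple p f r A ((s_tau r ^^ (i + 1)) l)"
  have top_k: "?c (f * r - 1 - (j + i * f)) = A k (f - 1 - j)"
    and top_l: "?b (f * r - 1 - (j + i * f)) = A l (f - 1 - j)"
    using tau'_tuple_top_digit[OF assms(1) _ assms(3,4)] assms(5,6) digits by blast+
  have "tup_shift p (f * r) ?c (j + i * f) \<le> tup_shift p (f * r) ?b (j + i * f)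
        \<longleftrightarrow> ?c (f * r - 1 - (j + i * f)) \<le> ?b (f * r - 1 - (j + i * f))"
    by (rule tup_shift_le_iff_top_digit_le[OF block_index_less[OF assms(3,4)] tau'_digits tau'_digits])
      (unfold top_k top_l, fact top_digits_ne)
  also have "\<dots> \<longleftrightarrow> A k (f - 1 - j) \<le> A l (f - 1 - j)"
    unfolding top_k top_l ..
  also have "\<dots> \<longleftrightarrow> tup_shift p f (A k) j \<le> tup_shift p f (A l) j"
    by (rule sym, rule tup_shift_le_iff_top_digit_le[OF assms(3)])
      (use digits assms(5,6) top_digits_ne in blast)+
  finally show ?thesis .
qed simp

theorem proposition6p1:
  fixes p f r :: nat and A :: "nat \<Rightarrow> nat \<Rightarrow> nat"
    and s s' :: "nat \<Rightarrow> nat \<Rightarrow> nat"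
  assumes "prime p" and "p > 3" and "f \<ge> 1"
    and "r \<in> {2, 3}"
    and "\<forall>k\<in>{1,2,3}. \<forall>j<f. A k j \<le> p - 1"
    and "weakly_generic p f A"
    and "is_orientation p f A s"
    and "\<forall>j<f. \<forall>i<r. s' (j + i * f) = (s_tau r ^^ (i + 1)) \<circ> s j"
  shows "is_orientation p (f * r) (tau'_tuple p f r A) s'"
  unfolding is_orientation_def
proof (intro allI impI)
  fix j'
  assume "j' < f * r"
  define j i where "j = j' mod f" and "i = j' div f"
  have j: "j < f" and i: "i < r" and j': "j' = j + i * f"
    using \<open>j' < f * r\<close> assms(3) unfolding j_def i_def
    by (simp_all add: less_mult_imp_div_less mult.commute)
  have digits: "A k j < p" if "k \<in> {1, 2, 3}" "j < f" for k j
    using assms(2,5) that by fastforce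
  define \<sigma> where "\<sigma> = s_tau r ^^ (i + 1)"
  have s_j: "s j permutes {1, 2, 3}"
    and "tup_shift p f (A (s j 2)) j \<le> tup_shift p f (A (s j 1)) j"
    and "tup_shift p f (A (s j 3)) j \<le> tup_shift p f (A (s j 2)) j"
    using assms(7) j unfolding is_orientation_def by auto
  moreover have "s j x \<in> {1, 2, 3}" if "x \<in> {1, 2, 3}" for x
    using permutes_in_image[OF s_j] that by blast
  moreover have "s' j' = \<sigma> \<circ> s j"
    using assms(8) i j j' \<sigma>_def by simp
  moreover have "\<sigma> permutes {1, 2, 3}"
    unfolding \<sigma>_def by (intro permutes_funpow s_tau_permutes assms(4))
  ultimately show "s' j' permutes {1, 2, 3} \<and>
    tup_shift p (f * r) (tau'_tuple p f r A (s' j' 2)) j' \<le> tup_shift p (f * r) (tau'_tuple p f r A (s' j' 1)) j' \<and>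
    tup_shift p (f * r) (tau'_tuple p f r A (s' j' 3)) j' \<le> tup_shift p (f * r) (tau'_tuple p f r A (s' j' 2)) j'"
    using tau'_tuple_shift_le_iff[OF assms(4,6) j i _ _ digits, folded \<sigma>_def] j'
    by (simp add: permutes_compose)
qed

end
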